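(* Let $X$ be a proper subset of $\{\mathrm{CONV},\mathrm{CA},\mathrm{REF},\mathrm{IAP}\}$ with $\mathrm{IAP}\in X$. Then there exists an infinite biosphere $(G,t)$ such that $\bigcap X$ (the set of $G$-subsets lying in every member of $X$, computed in $G$) is not upward generic.
   Context: An infinite biosphere is a directed graph $G$ together with a function $t$ assigning a real number $t(v)$ to each vertex, such that: (1) if $v$ is a parent of $w$ (edge from $v$ to $w$) then $t(v)<t(w)$; (2) for every $r\in\mathbb R$ at most finitely many vertices $v$ have $t(v)<r$; (3) every vertex has finitely many children; (4) $G$ is infinite. $v$ is an ancestor of $w$ (and $w$ a descendant of $v$) if there is a directed path $v=v_1,\dots,v_n=w$ with $n>1$. A $G$-subset is a set of vertices. $\mathrm{IAP}$: $G$-subsets $S$ such that no $v\in S$ has both infinitely many descendants in $S$ and infinitely many non-descendants in $S$. $\mathrm{CONV}$: $G$-subsets $S$ such that every $v\in G$ having an ancestor in $S$ and a descendant in $S$ lies in $S$. $\mathrm{CA}$: $G$-subsets $S$ for which there exists $v\in S$ such that every $w\in S$ with $w\neq v$ is a descendant of $v$. $\mathrm{REF}$: $G$-subsets $S$ such that every $v\in S$ with infinitely many descendants in $G$ has infinitely many descendants in $S$. For a nonempty linear order $(Y,<)$, an ascending chain of $G$-subsets indexed by $Y$ is a family $\{C_\alpha\}_{\alpha\in Y}$ with $C_\alpha\subseteq C_\beta$ whenever $\alpha<\beta$. A set $T$ of $G$-subsets is upward generic if for every ascending chain $\{C_\alpha\}_{\alpha\in Y}$ of nonempty $G$-subsets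 with each $C_\alpha\in T$, $\bigcup_\alpha C_\alpha\in T$. *)

theory Defs
  imports Complex_Main
begin

text \<open>An infinite biosphere with vertex set V (a set of naturals; every infinite
biosphere is countable by condition (2)), edge relation E (edge (v,w): v is a parent of w),
and time function t.\<close>
definition biosphere :: "nat set \<Rightarrow> (nat \<times> nat) set \<Rightarrow> (nat \<Rightarrow> real) \<Rightarrow> bool" where
  "biosphere V E t \<longleftrightarrow>
     E \<subseteq> V \<times> V \<and>
     (\<forall>(v, w) \<in> E. t v < t w) \<and>
     (\<forall>r::real. finite {v \<in> V. t v < r}) \<and>
     (\<forall>v \<in> V. finite {w. (v, w) \<in> E}) \<and>
     infinite V"

text \<open>w is a descendant of v iff (v,w) is in the transitive closure E^+.\<close>

datatype cls = CONV | CA | REF | IAP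

definition IAP_sets :: "nat set \<Rightarrow> (nat \<times> nat) set \<Rightarrow> nat set set" where
  "IAP_sets V E = {S. S \<subseteq> V \<and>
     (\<forall>v \<in> S. \<not> (infinite {w \<in> S. (v, w) \<in> E\<^sup>+} \<and> infinite {w \<in> S. (v, w) \<notin> E\<^sup>+}))}"

definition CONV_sets :: "nat set \<Rightarrow> (nat \<times> nat) set \<Rightarrow> nat set set" where
  "CONV_sets V E = {S. S \<subseteq> V \<and>
     (\<forall>v \<in> V. (\<exists>a \<in> S. (a, v) \<in> E\<^sup>+) \<and> (\<exists>d \<in> S. (v, d) \<in> E\<^sup>+) \<longrightarrow> v \<in> S)}"

definition CA_sets :: "nat set \<Rightarrow> (nat \<times> nat) set \<Rightarrow> nat set set" where
  "CA_sets V E = {S. S \<subseteq> V \<and> (\<exists>v \<in> S. \<forall>w \<in> S. w \<noteq> v \<longrightarrow> (v, w) \<in> E\<^sup>+)}"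

definition REF_sets :: "nat set \<Rightarrow> (nat \<times> nat) set \<Rightarrow> nat set set" where
  "REF_sets V E = {S. S \<subseteq> V \<and>
     (\<forall>v \<in> S. infinite {w \<in> V. (v, w) \<in> E\<^sup>+} \<longrightarrow> infinite {w \<in> S. (v, w) \<in> E\<^sup>+})}"

fun cls_sets :: "nat set \<Rightarrow> (nat \<times> nat) set \<Rightarrow> cls \<Rightarrow> nat set set" where
  "cls_sets V E CONV = CONV_sets V E"
| "cls_sets V E CA = CA_sets V E"
| "cls_sets V E REF = REF_sets V E"
| "cls_sets V E IAP = IAP_sets V E"

definition inter_cls :: "nat set \<Rightarrow> (nat \<times> nat) set \<Rightarrow> cls set \<Rightarrow> nat set set" where
  "inter_cls V E X = {S. S \<subseteq> V \<and> (\<forall>c \<in> X. S \<in> cls_sets V E c)}"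

text \<open>An ascending chain indexed by a nonempty linear order has
the same union as its image, a nonempty set of sets totally ordered by inclusion;
conversely such a set is a chain indexed by itself. So we quantify over such sets.\<close>
definition upward_generic :: "nat set set \<Rightarrow> bool" where
  "upward_generic T \<longleftrightarrow>
     (\<forall>\<C>. \<C> \<noteq> {} \<and> (\<forall>C \<in> \<C>. C \<noteq> {} \<and> C \<in> T) \<and>
          (\<forall>A \<in> \<C>. \<forall>B \<in> \<C>. A \<subseteq> B \<or> B \<subseteq> A)
          \<longrightarrow> \<Union>\<C> \<in> T)"

end

theory Submission
  imports Defs "HOL-Library.Infinite_Set"
begin

text \<open>The witness is the comb on the naturals: a spine 0, 3, 6, ... in which each 3k also
has the leaf 3k+1 as a child, and a branch B = 2, 5, 8, ... hanging off the root 0. Let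
C n = B \<union> {leaves \<le> n}. In C n every vertex of B has all but finitely many members as
descendants and leaves have no descendants, so C n is IAP; it is also REF and closed under
descendants (CONV), and adding 0 makes it rooted (CA) without losing IAP or REF. The union of
the C n contains B and all leaves, so vertex 2 has infinitely many descendants and infinitely
many non-descendants in it: the union is not IAP. When REF is not required, the initial
segments {..n} serve instead: they are finite, rooted at 0, closed under ancestors, and
exhaust the naturals.\<close>

lemma not_upward_generic_if_mono_chain:
  fixes C :: "nat \<Rightarrow> nat set"
  assumes "mono C" and "\<And>n. C n \<noteq> {}" and "\<And>n. C n \<in> T" and "\<Union>(range C) \<notin> T"
  shows "\<not> upward_generic T"
proof
  assume "upward_generic T"
  have "C i \<subseteq> C j \<or> C j \<subseteq> C i" for i j
    by (rule le_cases[of i j]) (auto dest: monoD[OF \<open>mono C\<close>])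
  then have "\<forall>A \<in> range C. \<forall>B \<in> range C. A \<subseteq> B \<or> B \<subseteq> A"
    by blast
  with \<open>upward_generic T\<close> have "\<Union>(range C) \<in> T"
    using assms(2,3) unfolding upward_generic_def by (elim allE[of _ "range C"]) auto
  with assms(4) show False
    by contradiction
qed

lemma IAP_sets_if_finite: "finite S \<Longrightarrow> S \<subseteq> V \<Longrightarrow> S \<in> IAP_sets V E"
  unfolding IAP_sets_def by auto

lemma CONV_sets_if_ancestor_closed:
  "S \<subseteq> V \<Longrightarrow> (\<And>v w. (v, w) \<in> E\<^sup>+ \<Longrightarrow> w \<in> S \<Longrightarrow> v \<in> S) \<Longrightarrow> S \<in> CONV_sets V E"
  unfolding CONV_sets_def by blast

lemma CONV_sets_if_descendant_closed:
  "S \<subseteq> V \<Longrightarrow> (\<And>v w. (v, w) \<in> E\<^sup>+ \<Longrightarrow> v \<in> S \<Longrightarrow> w \<in> S) \<Longrightarrow> S \<in> CONV_sets V E"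
  unfolding CONV_sets_def by blast

definition comb :: "(nat \<times> nat) set" where
  "comb = {(x, y). x mod 3 = 0 \<and> (y = x + 1 \<or> y = x + 3) \<or> x mod 3 = 2 \<and> y = x + 3 \<or> x = 0 \<and> y = 2}"

definition leaves :: "nat set" where
  "leaves = {v. v mod 3 = 1}"

definition branch :: "nat set" where
  "branch = {v. v mod 3 = 2}"

lemma biosphere_comb: "biosphere UNIV comb real"
  unfolding biosphere_def
proof (intro conjI)
  show "\<forall>(v, w) \<in> comb. real v < real w"
    by (auto simp: comb_def)
  show "\<forall>r. finite {v \<in> UNIV. real v < r}"
  proof
    fix r :: real
    have "{v \<in> UNIV. real v < r} \<subseteq> {..nat \<lceil>r\<rceil>}"
      by (auto, linarith)
    then show "finite {v \<in> UNIV. real v < r}"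
      by (rule finite_subset) simp
  qed
  show "\<forall>v \<in> UNIV. finite {w. (v, w) \<in> comb}"
  proof
    fix v
    have "{w. (v, w) \<in> comb} \<subseteq> {..v + 3}"
      by (auto simp: comb_def)
    then show "finite {w. (v, w) \<in> comb}"
      by (rule finite_subset) simp
  qed
qed auto

lemma comb_trancl_less: "(x, y) \<in> comb\<^sup>+ \<Longrightarrow> x < y"
  by (induction rule: trancl_induct) (auto simp: comb_def)

lemma comb_trancl_branch: "(x, y) \<in> comb\<^sup>+ \<Longrightarrow> x \<in> branch \<Longrightarrow> y \<in> branch"
  by (induction rule: trancl_induct) (auto simp: comb_def branch_def)

lemma comb_trancl_leaf: "x \<in> leaves \<Longrightarrow> (x, y) \<notin> comb\<^sup>+"
  by (auto elim: converse_tranclE simp: comb_def leaves_def)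

lemma comb_trancl_same_residue:
  assumes "x \<notin> leaves" and "x < y" and "y mod 3 = x mod 3"
  shows "(x, y) \<in> comb\<^sup>+"
proof -
  have "(x, x + 3 * Suc k) \<in> comb\<^sup>+" for k
  proof (induction k)
    case 0
    show ?case
      using \<open>x \<notin> leaves\<close> by (intro r_into_trancl) (auto simp: comb_def leaves_def)
  next
    case (Suc k)
    have "(x + 3 * Suc k, x + 3 * Suc (Suc k)) \<in> comb"
      using \<open>x \<notin> leaves\<close> by (auto simp: comb_def leaves_def) presburger
    with Suc.IH show ?case
      by (rule trancl_into_trancl)
  qed
  moreover obtain s where "y = x + 3 * s"
    using assms(2,3) by (elim mod_eq_nat1E) auto
  ultimately show ?thesis
    using \<open>x < y\<close> by (metis add_0_right less_irrefl mult_0_right not0_implies_Suc)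
qed

lemma comb_trancl_to_branch:
  assumes "x = 0 \<or> x \<in> branch" and "y \<in> branch" and "x < y"
  shows "(x, y) \<in> comb\<^sup>+"
proof (cases "x = 0")
  case True
  have edge: "(0, 2) \<in> comb"
    by (simp add: comb_def)
  show ?thesis
  proof (cases "y = 2")
    case False
    then have "(2, y) \<in> comb\<^sup>+"
      using assms(2,3) True by (intro comb_trancl_same_residue) (auto simp: leaves_def branch_def)
    with edge show ?thesis
      unfolding True by (rule trancl_into_trancl2)
  qed (use edge True in auto)
next
  case False
  then show ?thesis
    using assms by (intro comb_trancl_same_residue) (auto simp: leaves_def branch_def)
qed

lemma comb_trancl_from_root:
  assumes "0 < y"
  shows "(0, y) \<in> comb\<^sup>+"
proof -
  consider "y mod 3 = 0" | "y mod 3 = 1" | "y mod 3 = 2"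
    by linarith
  then show ?thesis
  proof cases
    case 1
    then show ?thesis
      using assms by (intro comb_trancl_same_residue) (auto simp: leaves_def)
  next
    case 2
    have spine: "(y - 1) mod 3 = 0"
      using 2 assms by presburger
    have "(0, y - 1) \<in> comb\<^sup>*"
    proof (cases "y = 1")
      case False
      then have "(0, y - 1) \<in> comb\<^sup>+"
        using 2 spine by (intro comb_trancl_same_residue) (auto simp: leaves_def)
      then show ?thesis
        by simp
    qed simp
    moreover have "(y - 1, y) \<in> comb"
      using spine assms by (simp add: comb_def)
    ultimately show ?thesis
      by (rule rtrancl_into_trancl1)
  next
    case 3
    then show ?thesis
      using assms by (intro comb_trancl_to_branch) (auto simp: branch_def)
  qed
qed

lemma infinite_branch_above: "infinite {w \<in> branch. x < w}"
  unfolding infinite_nat_iff_unbounded_le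
proof
  fix m
  show "\<exists>n\<ge>m. n \<in> {w \<in> branch. x < w}"
    by (rule exI[of _ "3 * (m + x) + 2"]) (simp add: branch_def, presburger)
qed

lemma infinite_leaves: "infinite leaves"
  unfolding infinite_nat_iff_unbounded_le
proof
  fix m
  show "\<exists>n\<ge>m. n \<in> leaves"
    by (rule exI[of _ "3 * m + 1"]) (simp add: leaves_def)
qed

lemma CA_sets_comb: "0 \<in> S \<Longrightarrow> S \<in> CA_sets UNIV comb"
  unfolding CA_sets_def using comb_trancl_from_root by blast

lemma IAP_sets_comb:
  assumes "S \<subseteq> insert 0 (branch \<union> {v \<in> leaves. v \<le> n})"
  shows "S \<in> IAP_sets UNIV comb"
  unfolding IAP_sets_def
proof (intro CollectI conjI ballI)
  fix x
  assume "x \<in> S"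
  show "\<not> (infinite {w \<in> S. (x, w) \<in> comb\<^sup>+} \<and> infinite {w \<in> S. (x, w) \<notin> comb\<^sup>+})"
  proof (cases "x \<in> leaves")
    case True
    then show ?thesis
      using comb_trancl_leaf by simp
  next
    case False
    then have x: "x = 0 \<or> x \<in> branch"
      using \<open>x \<in> S\<close> assms by auto
    have "{w \<in> S. (x, w) \<notin> comb\<^sup>+} \<subseteq> {..max x n}"
    proof
      fix w
      assume w: "w \<in> {w \<in> S. (x, w) \<notin> comb\<^sup>+}"
      show "w \<in> {..max x n}"
      proof (rule ccontr)
        assume "w \<notin> {..max x n}"
        then have "x < w" and "w \<in> branch"
          using w assms by auto
        then show False
          using w x comb_trancl_to_branch by blast
      qed
    qed
    then show ?thesis
      using finite_subset by blast
  qed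
qed simp

lemma REF_sets_comb:
  assumes "branch \<subseteq> S" and "S \<subseteq> insert 0 (branch \<union> leaves)"
  shows "S \<in> REF_sets UNIV comb"
  unfolding REF_sets_def
proof (intro CollectI conjI ballI impI)
  fix x
  assume "x \<in> S" and "infinite {w \<in> UNIV. (x, w) \<in> comb\<^sup>+}"
  then have "x = 0 \<or> x \<in> branch"
    using assms(2) comb_trancl_leaf by auto
  then have "{w \<in> branch. x < w} \<subseteq> {w \<in> S. (x, w) \<in> comb\<^sup>+}"
    using assms(1) comb_trancl_to_branch by auto
  then show "infinite {w \<in> S. (x, w) \<in> comb\<^sup>+}"
    using infinite_branch_above finite_subset by blast
qed simp

lemma not_IAP_sets_comb:
  assumes "branch \<union> leaves \<subseteq> S"
  shows "S \<notin> IAP_sets UNIV comb"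
proof
  assume "S \<in> IAP_sets UNIV comb"
  moreover have "2 \<in> S"
    using assms by (auto simp: branch_def)
  ultimately have "\<not> (infinite {w \<in> S. (2, w) \<in> comb\<^sup>+} \<and> infinite {w \<in> S. (2, w) \<notin> comb\<^sup>+})"
    unfolding IAP_sets_def by blast
  moreover have "{w \<in> branch. 2 < w} \<subseteq> {w \<in> S. (2, w) \<in> comb\<^sup>+}"
    using assms comb_trancl_to_branch[of 2] by (auto simp: branch_def)
  then have "infinite {w \<in> S. (2, w) \<in> comb\<^sup>+}"
    using infinite_branch_above finite_subset by blast
  moreover have "leaves \<subseteq> {w \<in> S. (2, w) \<notin> comb\<^sup>+}"
    using assms comb_trancl_branch by (auto simp: branch_def leaves_def)
  then have "infinite {w \<in> S. (2, w) \<notin> comb\<^sup>+}"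
    using infinite_leaves finite_subset by blast
  ultimately show False
    by blast
qed

lemma atMost_cls_sets_comb: "k \<noteq> REF \<Longrightarrow> {..n} \<in> cls_sets UNIV comb k"
proof (cases k)
  case CONV
  have "{..n} \<in> CONV_sets UNIV comb"
    by (rule CONV_sets_if_ancestor_closed) (auto dest: comb_trancl_less)
  then show ?thesis
    by (simp add: CONV)
qed (simp_all add: CA_sets_comb IAP_sets_if_finite)

lemma rooted_cls_sets_comb:
  assumes "k \<noteq> CONV"
  shows "insert 0 (branch \<union> {v \<in> leaves. v \<le> n}) \<in> cls_sets UNIV comb k"
proof (cases k)
  case REF
  have "insert 0 (branch \<union> {v \<in> leaves. v \<le> n}) \<in> REF_sets UNIV comb"
    by (rule REF_sets_comb) auto
  then show ?thesis
    by (simp add: REF)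
qed (use assms in \<open>simp_all add: CA_sets_comb IAP_sets_comb[OF order_refl]\<close>)

lemma rootless_cls_sets_comb:
  assumes "k \<noteq> CA"
  shows "branch \<union> {v \<in> leaves. v \<le> n} \<in> cls_sets UNIV comb k"
proof (cases k)
  case CONV
  have "branch \<union> {v \<in> leaves. v \<le> n} \<in> CONV_sets UNIV comb"
    by (rule CONV_sets_if_descendant_closed) (auto dest: comb_trancl_branch comb_trancl_leaf)
  then show ?thesis
    by (simp add: CONV)
next
  case REF
  have "branch \<union> {v \<in> leaves. v \<le> n} \<in> REF_sets UNIV comb"
    by (rule REF_sets_comb) auto
  then show ?thesis
    by (simp add: REF)
next
  case IAP
  have "branch \<union> {v \<in> leaves. v \<le> n} \<in> IAP_sets UNIV comb"
    by (rule IAP_sets_comb) auto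
  then show ?thesis
    by (simp add: IAP)
qed (use assms in simp)

lemma chain_missing_class_comb:
  assumes "c \<noteq> IAP"
  obtains C :: "nat \<Rightarrow> nat set" where "mono C" and "\<And>n. C n \<noteq> {}"
    and "\<And>n k. k \<noteq> c \<Longrightarrow> C n \<in> cls_sets UNIV comb k" and "branch \<union> leaves \<subseteq> \<Union>(range C)"
proof (cases c)
  case CONV
  show ?thesis
    by (rule that[of "\<lambda>n. insert 0 (branch \<union> {v \<in> leaves. v \<le> n})"])
      (auto simp: mono_def CONV rooted_cls_sets_comb)
next
  case CA
  have "2 \<in> branch"
    by (simp add: branch_def)
  then show ?thesis
    by (intro that[of "\<lambda>n. branch \<union> {v \<in> leaves. v \<le> n}"])
      (auto simp: mono_def CA rootless_cls_sets_comb)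
next
  case REF
  show ?thesis
    by (rule that[of atMost]) (auto simp: mono_def REF atMost_cls_sets_comb)
qed (use assms in simp)

theorem mainTheorem7:
  fixes X :: "cls set"
  assumes "IAP \<in> X" and "X \<noteq> UNIV"
  shows "\<exists>V E t. biosphere V E t \<and> \<not> upward_generic (inter_cls V E X)"
proof -
  obtain c where "c \<notin> X"
    using assms(2) by auto
  with assms(1) obtain C :: "nat \<Rightarrow> nat set" where "mono C" and "\<And>n. C n \<noteq> {}"
    and C_cls: "\<And>n k. k \<noteq> c \<Longrightarrow> C n \<in> cls_sets UNIV comb k"
    and "branch \<union> leaves \<subseteq> \<Union>(range C)"
    using chain_missing_class_comb by metis
  have "C n \<in> inter_cls UNIV comb X" for n
    using \<open>c \<notin> X\<close> by (auto simp: inter_cls_def intro: C_cls)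
  moreover have "\<Union>(range C) \<notin> inter_cls UNIV comb X"
    using not_IAP_sets_comb[OF \<open>branch \<union> leaves \<subseteq> \<Union>(range C)\<close>] assms(1)
    unfolding inter_cls_def using cls_sets.simps(4) by blast
  ultimately have "\<not> upward_generic (inter_cls UNIV comb X)"
    using not_upward_generic_if_mono_chain \<open>mono C\<close> \<open>\<And>n. C n \<noteq> {}\<close> by blast
  then show ?thesis
    using biosphere_comb by blast
qed

end
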